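(* Let $d, n, D, k$ be positive integers, let $h:\mathbb{R}\to\mathbb{R}$ be any function (applied entrywise), let $\sigma$ denote the sigmoid function (applied entrywise), and let $W_o\in\mathbb{R}^{d\times kD}$, $W_s\in\mathbb{R}^{kD\times d}$, $W_1,\dots,W_k\in\mathbb{R}^{D\times d}$. For $X\in\mathbb{R}^{d\times n}$ define $$H(X)=\begin{bmatrix} h(W_1X)\\ h(W_1X)\circ h(W_2X)\\ \vdots\\ \prod_{m=1}^k h(W_mX)\end{bmatrix}\mathbf{1}_n\in\mathbb{R}^{kD\times 1},\qquad \mathrm{PoM}(X)=W_o\left[\sigma(W_sX)\circ \big(H(X)\mathbf{1}_n^\top\big)\right]\in\mathbb{R}^{d\times n},$$ where $\circ$ and $\prod$ denote entrywise (Hadamard) products, the blocks are stacked vertically, and $\mathbf{1}_n\in\mathbb{R}^n$ is the all-ones vector. Then $\mathrm{PoM}$ is permutation equivariant: for every $X\in\mathbb{R}^{d\times n}$ and every $n\times n$ permutation matrix $P$ (permuting columns), $\mathrm{PoM}(XP)=\mathrm{PoM}(X)P$.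
   Context: The columns of $X$ are viewed as a sequence (set) of $n$ tokens in $\mathbb{R}^d$; $\mathrm{PoM}$ is called the Polynomial Mixer of degree $k$. *)

theory Defs
  imports "HOL-Combinatorics.Permutations" "Jordan_Normal_Form.Matrix"
begin

definition sigmoid :: "real \<Rightarrow> real" where
  "sigmoid x = 1 / (1 + exp (- x))"

definition hadamard :: "real mat \<Rightarrow> real mat \<Rightarrow> real mat" where
  "hadamard A B = mat (dim_row A) (dim_col A) (\<lambda>(i,j). A $$ (i,j) * B $$ (i,j))"

text \<open>Block m (0-indexed): the Hadamard product h(W_1 X) o ... o h(W_(m+1) X).\<close>
fun hblock :: "(real \<Rightarrow> real) \<Rightarrow> real mat list \<Rightarrow> real mat \<Rightarrow> nat \<Rightarrow> real mat" where
  "hblock h Ws X 0 = map_mat h ((Ws ! 0) * X)"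
| "hblock h Ws X (Suc m) = hadamard (hblock h Ws X m) (map_mat h ((Ws ! Suc m) * X))"

fun vstack :: "real mat list \<Rightarrow> real mat" where
  "vstack [] = zero_mat 0 0"
| "vstack [A] = A"
| "vstack (A # As) = A @\<^sub>r vstack As"

definition ones_col :: "nat \<Rightarrow> real mat" where
  "ones_col n = mat n 1 (\<lambda>_. 1)"

definition ones_row :: "nat \<Rightarrow> real mat" where
  "ones_row n = mat 1 n (\<lambda>_. 1)"

definition Hmat :: "(real \<Rightarrow> real) \<Rightarrow> real mat list \<Rightarrow> real mat \<Rightarrow> real mat" where
  "Hmat h Ws X = vstack (map (hblock h Ws X) [0..<length Ws]) * ones_col (dim_col X)"

definition PoM :: "(real \<Rightarrow> real) \<Rightarrow> real mat \<Rightarrow> real mat \<Rightarrow> real mat list \<Rightarrow> real mat \<Rightarrow> real mat" where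
  "PoM h Wo Wsel Ws X =
     Wo * hadamard (map_mat sigmoid (Wsel * X)) (Hmat h Ws X * ones_row (dim_col X))"

text \<open>n x n permutation matrix: P e_j = e_(pi j), so X P permutes the columns of X.\<close>
definition perm_matrix :: "nat \<Rightarrow> real mat \<Rightarrow> bool" where
  "perm_matrix n P \<longleftrightarrow> (\<exists>\<pi>. \<pi> permutes {..<n} \<and>
      P = mat n n (\<lambda>(i,j). if i = \<pi> j then 1 else 0))"

end

theory Submission
  imports Defs
begin

(* Right multiplication by a permutation matrix only reorders columns. Every layer of the
  Polynomial Mixer acts entrywise (h, sigmoid, Hadamard products), multiplies from the left
  (W X) or stacks blocks vertically, and all of these commute with reordering columns. The aggregated vector H(X) sums over all columns, so it does not change at all, and
  its broadcast H(X) 1^T has identical columns, so it is fixed by the reordering. *)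

definition perm_mat :: "nat \<Rightarrow> (nat \<Rightarrow> nat) \<Rightarrow> 'a :: {zero, one} mat" where
  "perm_mat n \<pi> = mat n n (\<lambda>(i, j). if i = \<pi> j then 1 else 0)"

lemma perm_mat_carrier [simp]: "perm_mat n \<pi> \<in> carrier_mat n n"
  and dim_row_perm_mat [simp]: "dim_row (perm_mat n \<pi>) = n"
  and dim_col_perm_mat [simp]: "dim_col (perm_mat n \<pi>) = n"
  by (simp_all add: perm_mat_def)

lemma perm_matrix_iff: "perm_matrix n P \<longleftrightarrow> (\<exists>\<pi>. \<pi> permutes {..<n} \<and> P = perm_mat n \<pi>)"
  by (simp add: perm_matrix_def perm_mat_def)

lemma permutes_lessThan_less: "\<pi> permutes {..<n} \<Longrightarrow> j < n \<Longrightarrow> \<pi> j < n"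
  using permutes_in_image[of \<pi> "{..<n}" j] by simp

lemma mult_perm_mat:
  fixes M :: "'a :: semiring_1 mat"
  assumes "\<pi> permutes {..<n}" "dim_col M = n"
  shows "M * perm_mat n \<pi> = mat (dim_row M) n (\<lambda>(i, j). M $$ (i, \<pi> j))"
proof (rule eq_matI)
  fix i j
  assume i: "i < dim_row (mat (dim_row M) n (\<lambda>(i, j). M $$ (i, \<pi> j)))"
    and j: "j < dim_col (mat (dim_row M) n (\<lambda>(i, j). M $$ (i, \<pi> j)))"
  have "(M * perm_mat n \<pi>) $$ (i, j) = (\<Sum>l<n. M $$ (i, l) * (if l = \<pi> j then 1 else 0))"
    using i j assms(2)
    by (simp add: perm_mat_def scalar_prod_def row_def col_def lessThan_atLeast0)
  also have "\<dots> = M $$ (i, \<pi> j)"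
    using permutes_lessThan_less[OF assms(1)] j by (simp add: if_distrib cong: if_cong)
  finally show "(M * perm_mat n \<pi>) $$ (i, j) = mat (dim_row M) n (\<lambda>(i, j). M $$ (i, \<pi> j)) $$ (i, j)"
    using i j by simp
qed (auto simp: perm_mat_def)

lemma map_mat_mult_perm_mat:
  fixes A :: "'a :: semiring_1 mat" and f :: "'a \<Rightarrow> 'b :: semiring_1"
  assumes "\<pi> permutes {..<n}" "dim_col A = n"
  shows "map_mat f (A * perm_mat n \<pi>) = map_mat f A * perm_mat n \<pi>"
  using assms permutes_lessThan_less[OF assms(1)]
  by (auto simp: mult_perm_mat intro!: eq_matI)

lemma map_mat_mult_mult_perm_mat:
  fixes W X :: "'a :: semiring_1 mat" and f :: "'a \<Rightarrow> 'b :: semiring_1"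
  assumes "\<pi> permutes {..<n}" "W \<in> carrier_mat m d" "X \<in> carrier_mat d n"
  shows "map_mat f (W * (X * perm_mat n \<pi>)) = map_mat f (W * X) * perm_mat n \<pi>"
  using assoc_mult_mat[OF assms(2,3) perm_mat_carrier, of \<pi>]
    map_mat_mult_perm_mat[OF assms(1), of "W * X" f] assms(2,3)
  by simp

lemma hadamard_mult_perm_mat:
  assumes "\<pi> permutes {..<n}" "A \<in> carrier_mat m n" "B \<in> carrier_mat m n"
  shows "hadamard (A * perm_mat n \<pi>) (B * perm_mat n \<pi>) = hadamard A B * perm_mat n \<pi>"
  using assms permutes_lessThan_less[OF assms(1)]
  by (subst (1 2 3) mult_perm_mat) (auto simp: hadamard_def intro!: eq_matI)

lemma append_rows_mult_perm_mat:
  fixes A B :: "'a :: semiring_1 mat"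
  assumes "\<pi> permutes {..<n}" "dim_col A = n" "dim_col B = n"
  shows "(A * perm_mat n \<pi>) @\<^sub>r (B * perm_mat n \<pi>) = (A @\<^sub>r B) * perm_mat n \<pi>"
  using assms permutes_lessThan_less[OF assms(1)]
  by (subst (1 2 3) mult_perm_mat) (auto simp: append_rows_def intro!: eq_matI)

lemma dim_col_vstack:
  "As \<noteq> [] \<Longrightarrow> \<forall>A \<in> set As. dim_col A = n \<Longrightarrow> dim_col (vstack As) = n"
  by (induction As rule: vstack.induct) (auto simp: append_rows_def)

lemma vstack_carrier:
  "As \<noteq> [] \<Longrightarrow> \<forall>A \<in> set As. A \<in> carrier_mat r n \<Longrightarrow> vstack As \<in> carrier_mat (length As * r) n"
  by (induction As rule: vstack.induct) auto

lemma vstack_mult_perm_mat: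
  assumes "\<pi> permutes {..<n}"
  shows "As \<noteq> [] \<Longrightarrow> \<forall>A \<in> set As. dim_col A = n \<Longrightarrow>
    vstack (map (\<lambda>A. A * perm_mat n \<pi>) As) = vstack As * perm_mat n \<pi>"
proof (induction As rule: vstack.induct)
  case (3 A B As)
  then show ?case
    using append_rows_mult_perm_mat[OF assms, of A "vstack (B # As)"] dim_col_vstack[of "B # As" n]
    by simp
qed auto

lemma hblock_carrier: "hblock h Ws X m \<in> carrier_mat (dim_row (Ws ! 0)) (dim_col X)"
  by (induction m) (auto simp: hadamard_def)

lemma hblock_mult_perm_mat:
  assumes "\<pi> permutes {..<n}" "\<forall>W \<in> set Ws. W \<in> carrier_mat D d" "X \<in> carrier_mat d n"
    and "m < length Ws"
  shows "hblock h Ws (X * perm_mat n \<pi>) m = hblock h Ws X m * perm_mat n \<pi>"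
proof -
  have W: "Ws ! i \<in> carrier_mat D d" if "i < length Ws" for i
    using assms(2) that by simp
  note layer = map_mat_mult_mult_perm_mat[OF assms(1) W assms(3)]
  show ?thesis
    using assms(4)
  proof (induction m)
    case 0
    then show ?case by (simp add: layer)
  next
    case (Suc m)
    have "dim_row (Ws ! 0) = D"
      using W[of 0] Suc.prems by force
    then have "hblock h Ws X m \<in> carrier_mat D n"
      using hblock_carrier[of h Ws X m] assms(3) by simp
    moreover have "map_mat h (Ws ! Suc m * X) \<in> carrier_mat D n"
      using W[OF Suc.prems] assms(3) by simp
    ultimately show ?case
      using Suc hadamard_mult_perm_mat[OF assms(1)] by (simp add: layer)
  qed
qed

lemma ones_col_carrier [simp]: "ones_col n \<in> carrier_mat n 1"
  by (simp add: ones_col_def)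

lemma ones_row_carrier [simp]: "ones_row n \<in> carrier_mat 1 n"
  by (simp add: ones_row_def)

lemma perm_mat_mult_ones_col:
  assumes "\<pi> permutes {..<n}"
  shows "perm_mat n \<pi> * ones_col n = ones_col n"
proof (rule eq_matI)
  fix i j
  assume i: "i < dim_row (ones_col n)" and j: "j < dim_col (ones_col n)"
  have "(perm_mat n \<pi> * ones_col n) $$ (i, j) = (\<Sum>l<n. if i = \<pi> l then 1 else 0)"
    using i j
    by (simp add: perm_mat_def ones_col_def scalar_prod_def row_def col_def lessThan_atLeast0)
  also have "\<dots> = (\<Sum>l<n. if i = l then 1 else 0)"
    using sum.reindex_bij_betw[OF permutes_imp_bij[OF assms], of "\<lambda>l. if i = l then 1 else 0"]
    by simp
  finally show "(perm_mat n \<pi> * ones_col n) $$ (i, j) = ones_col n $$ (i, j)"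
    using i j by (simp add: ones_col_def)
qed (auto simp: perm_mat_def ones_col_def)

lemma ones_row_mult_perm_mat:
  assumes "\<pi> permutes {..<n}"
  shows "ones_row n * perm_mat n \<pi> = ones_row n"
  using permutes_lessThan_less[OF assms]
  by (subst mult_perm_mat[OF assms]) (auto simp: ones_row_def intro!: eq_matI)

lemma vstack_hblock_carrier:
  assumes "Ws \<noteq> []"
  shows "vstack (map (hblock h Ws X) [0..<length Ws])
    \<in> carrier_mat (length Ws * dim_row (Ws ! 0)) (dim_col X)"
  using vstack_carrier[of "map (hblock h Ws X) [0..<length Ws]"] hblock_carrier[of h Ws X] assms
  by simp

lemma Hmat_carrier: "Ws \<noteq> [] \<Longrightarrow> Hmat h Ws X \<in> carrier_mat (length Ws * dim_row (Ws ! 0)) 1"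
  using mult_carrier_mat[OF vstack_hblock_carrier ones_col_carrier] by (simp add: Hmat_def)

lemma Hmat_mult_perm_mat:
  assumes "\<pi> permutes {..<n}" "Ws \<noteq> []" "\<forall>W \<in> set Ws. W \<in> carrier_mat D d"
    and "X \<in> carrier_mat d n"
  shows "Hmat h Ws (X * perm_mat n \<pi>) = Hmat h Ws X"
proof -
  define P :: "real mat" where "P = perm_mat n \<pi>"
  define V where "V = vstack (map (hblock h Ws X) [0..<length Ws])"
  have V: "V \<in> carrier_mat (length Ws * dim_row (Ws ! 0)) n"
    using vstack_hblock_carrier[OF assms(2), of h X] carrier_matD(2)[OF assms(4)]
    by (simp add: V_def)
  have "vstack (map (hblock h Ws (X * P)) [0..<length Ws])
      = vstack (map (\<lambda>A. A * P) (map (hblock h Ws X) [0..<length Ws]))"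
    using hblock_mult_perm_mat[OF assms(1,3,4)]
    by (auto simp: P_def intro!: arg_cong[where f = vstack] map_cong)
  also have "\<dots> = V * P"
    using vstack_mult_perm_mat[OF assms(1), of "map (hblock h Ws X) [0..<length Ws]"] assms(2,4)
      hblock_carrier[of h Ws X, THEN carrier_matD(2)]
    by (simp add: V_def P_def)
  finally have "Hmat h Ws (X * P) = V * P * ones_col n"
    using assms(4) by (simp add: Hmat_def P_def)
  also have "\<dots> = V * (P * ones_col n)"
    using assoc_mult_mat[OF V perm_mat_carrier ones_col_carrier] by (simp add: P_def)
  also have "\<dots> = Hmat h Ws X"
    using assms(4) perm_mat_mult_ones_col[OF assms(1)] by (simp add: Hmat_def V_def P_def)
  finally show ?thesis by (simp add: P_def)
qed

theorem proposition1:
  fixes d n D k :: nat and h :: "real \<Rightarrow> real"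
    and Wo Wsel X P :: "real mat" and Ws :: "real mat list"
  assumes "d > 0" "n > 0" "D > 0" "k > 0"
    and "Wo \<in> carrier_mat d (k * D)"
    and "Wsel \<in> carrier_mat (k * D) d"
    and "length Ws = k" "\<forall>W \<in> set Ws. W \<in> carrier_mat D d"
    and "X \<in> carrier_mat d n"
    and "perm_matrix n P"
  shows "PoM h Wo Wsel Ws (X * P) = PoM h Wo Wsel Ws X * P"
proof -
  obtain \<pi> where \<pi>: "\<pi> permutes {..<n}" and P: "P = perm_mat n \<pi>"
    using assms(10) by (auto simp: perm_matrix_iff)
  let ?S = "map_mat sigmoid (Wsel * X)"
  let ?B = "Hmat h Ws X * ones_row n"
  have Ws: "Ws \<noteq> []"
    using assms(4,7) by auto
  moreover have "dim_row (Ws ! 0) = D"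
    using Ws assms(8) by (cases Ws) auto
  ultimately have H: "Hmat h Ws X \<in> carrier_mat (k * D) 1"
    using Hmat_carrier[OF Ws, of h X] assms(7) by simp
  have B: "?B \<in> carrier_mat (k * D) n" "?B * P = ?B"
    using mult_carrier_mat[OF H ones_row_carrier] assoc_mult_mat[OF H ones_row_carrier perm_mat_carrier]
      ones_row_mult_perm_mat[OF \<pi>]
    by (simp_all add: P)
  have S: "map_mat sigmoid (Wsel * (X * P)) = ?S * P"
    using map_mat_mult_mult_perm_mat[OF \<pi> assms(6,9)] by (simp add: P)
  have "PoM h Wo Wsel Ws (X * P) = Wo * hadamard (?S * P) (?B * P)"
    using Hmat_mult_perm_mat[OF \<pi> Ws assms(8,9)] S B(2) assms(9) by (simp add: PoM_def P)
  also have "\<dots> = Wo * (hadamard ?S ?B * P)"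
    using hadamard_mult_perm_mat[OF \<pi> _ B(1)] assms(6,9) by (simp add: P)
  also have "\<dots> = PoM h Wo Wsel Ws X * P"
    using assoc_mult_mat[OF assms(5) _ perm_mat_carrier, of "hadamard ?S ?B"] assms(6,9)
    by (simp add: PoM_def P hadamard_def)
  finally show ?thesis .
qed

end
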